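(* Let $L\supseteq\mathsf{CKCEM}$ be a logic in the language $\mathcal{L}_\triangleright$, and let $p,q,r$ be three distinct atoms. If $L$ has the uniform Lyndon interpolation property, then $L\vdash(p\triangleright r)\vee(q\triangleright\neg r)$.
   Context: Formulas of $\mathcal{L}_\triangleright$: atoms, $\bot$, $\wedge,\vee,\to$, binary $\triangleright$; $\top:=\bot\to\bot$, $\neg A:=A\to\bot$. A logic is a set of formulas containing all classical tautologies and closed under substitution and modus ponens. $\mathsf{CE}$ is the smallest set containing all instances of classical tautologies and closed under modus ponens and the rule: from $\phi_0\leftrightarrow\phi_1$ and $\psi_0\leftrightarrow\psi_1$ infer $(\phi_0\triangleright\psi_0)\to(\phi_1\triangleright\psi_1)$. $\mathsf{CKCEM}$ is $\mathsf{CE}$ plus all instances of (CM) $(\phi\triangleright\psi\wedge\theta)\to(\phi\triangleright\psi)\wedge(\phi\triangleright\theta)$, (CC) $(\phi\triangleright\psi)\wedge(\phi\triangleright\theta)\to(\phi\triangleright\psi\wedge\theta)$, (CN) $\phi\triangleright\top$, (CEM) $(\phi\triangleright\psi)\vee(\phi\triangleright\neg\psi)$. Positive/negative variables: $V^+(p)=\{p\}$, $V^-(p)=\varnothing$; $V^\pm(\bot)=V^\pm(\top)=\varnothing$; $V^\pm(\phi\odot\psi)=V^\pm(\phi)\cup V^\pm(\psi)$ for $\odot\in\{\wedge,\vee\}$; $V^+(\phi\to\psi)=V^-(\phi)\cup V^+(\psi)$, $V^-(\phi\to\psi)=V^+(\phi)\cup V^-(\psi)$; $V^+(\phi\triangleright\psi)=V^-(\phi)\cup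 V^+(\psi)$, $V^-(\phi\triangleright\psi)=V^+(\phi)\cup V^-(\psi)$. $p^\circ$-free: $p\notin V^\circ(\cdot)$. ULIP: for every formula $\phi$, atom $p$, $\circ\in\{+,-\}$ there are $p^\circ$-free formulas $\forall^\circ p\,\phi$, $\exists^\circ p\,\phi$ with $V^\dagger(\cdot)\subseteq V^\dagger(\phi)$ for both $\dagger\in\{+,-\}$, such that $L\vdash\forall^\circ p\,\phi\to\phi$; for every $p^\circ$-free $\psi$, $L\vdash\psi\to\phi$ implies $L\vdash\psi\to\forall^\circ p\,\phi$; $L\vdash\phi\to\exists^\circ p\,\phi$; for every $p^\circ$-free $\psi$, $L\vdash\phi\to\psi$ implies $L\vdash\exists^\circ p\,\phi\to\psi$. *)

theory Defs
  imports Main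
begin

text \<open>Formulas of the language with a binary conditional operator (Tri = triangle).\<close>
datatype fm = Atom nat | Bot | And fm fm | Or fm fm | Imp fm fm | Tri fm fm

definition Top :: fm where "Top = Imp Bot Bot"
definition Neg :: "fm \<Rightarrow> fm" where "Neg A = Imp A Bot"
definition Iff :: "fm \<Rightarrow> fm \<Rightarrow> fm" where "Iff A B = And (Imp A B) (Imp B A)"

fun ceval :: "(fm \<Rightarrow> bool) \<Rightarrow> fm \<Rightarrow> bool" where
  "ceval v (Atom p) = v (Atom p)"
| "ceval v Bot = False"
| "ceval v (And A B) = (ceval v A \<and> ceval v B)"
| "ceval v (Or A B) = (ceval v A \<or> ceval v B)"
| "ceval v (Imp A B) = (ceval v A \<longrightarrow> ceval v B)"
| "ceval v (Tri A B) = v (Tri A B)"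

definition taut :: "fm \<Rightarrow> bool" where "taut A = (\<forall>v. ceval v A)"

fun subst :: "(nat \<Rightarrow> fm) \<Rightarrow> fm \<Rightarrow> fm" where
  "subst s (Atom p) = s p"
| "subst s Bot = Bot"
| "subst s (And A B) = And (subst s A) (subst s B)"
| "subst s (Or A B) = Or (subst s A) (subst s B)"
| "subst s (Imp A B) = Imp (subst s A) (subst s B)"
| "subst s (Tri A B) = Tri (subst s A) (subst s B)"

definition is_logic :: "fm set \<Rightarrow> bool" where
  "is_logic L = ((\<forall>A. taut A \<longrightarrow> A \<in> L)
     \<and> (\<forall>s A. A \<in> L \<longrightarrow> subst s A \<in> L)
     \<and> (\<forall>A B. A \<in> L \<longrightarrow> Imp A B \<in> L \<longrightarrow> B \<in> L))"

inductive_set CKCEM :: "fm set" where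
  taut: "taut A \<Longrightarrow> A \<in> CKCEM"
| mp: "A \<in> CKCEM \<Longrightarrow> Imp A B \<in> CKCEM \<Longrightarrow> B \<in> CKCEM"
| RCE: "Iff A0 A1 \<in> CKCEM \<Longrightarrow> Iff B0 B1 \<in> CKCEM \<Longrightarrow> Imp (Tri A0 B0) (Tri A1 B1) \<in> CKCEM"
| CM: "Imp (Tri A (And B C)) (And (Tri A B) (Tri A C)) \<in> CKCEM"
| CC: "Imp (And (Tri A B) (Tri A C)) (Tri A (And B C)) \<in> CKCEM"
| CN: "Tri A Top \<in> CKCEM"
| CEM: "Or (Tri A B) (Tri A (Neg B)) \<in> CKCEM"

text \<open>Positive (True) and negative (False) variables.\<close>
fun V :: "bool \<Rightarrow> fm \<Rightarrow> nat set" where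
  "V pol (Atom p) = (if pol then {p} else {})"
| "V pol Bot = {}"
| "V pol (And A B) = V pol A \<union> V pol B"
| "V pol (Or A B) = V pol A \<union> V pol B"
| "V pol (Imp A B) = V (\<not> pol) A \<union> V pol B"
| "V pol (Tri A B) = V (\<not> pol) A \<union> V pol B"

definition ULIP :: "fm set \<Rightarrow> bool" where
  "ULIP L = (\<forall>A p pol.
     (\<exists>F. p \<notin> V pol F \<and> V True F \<subseteq> V True A \<and> V False F \<subseteq> V False A
        \<and> Imp F A \<in> L
        \<and> (\<forall>B. p \<notin> V pol B \<longrightarrow> Imp B A \<in> L \<longrightarrow> Imp B F \<in> L))
   \<and> (\<exists>E. p \<notin> V pol E \<and> V True E \<subseteq> V True A \<and> V False E \<subseteq> V False A
        \<and> Imp A E \<in> L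
        \<and> (\<forall>B. p \<notin> V pol B \<longrightarrow> Imp A B \<in> L \<longrightarrow> Imp E B \<in> L)))"

end

theory Submission
  imports Defs
begin

text \<open>By CEM and the congruence rule, \<open>\<not>(q \<triangleright> \<not>r)\<close> implies \<open>q \<triangleright> r\<close>, and \<open>q\<close> occurs only
  positively in the antecedent while the consequent is \<open>q\<^sup>+\<close>-free. The uniform interpolant
  \<open>\<exists>\<^sup>+q \<not>(q \<triangleright> \<not>r)\<close> therefore contains no \<open>q\<close> at all and still implies \<open>q \<triangleright> r\<close>;
  substituting \<open>p\<close> for \<open>q\<close> leaves it unchanged, so \<open>\<not>(q \<triangleright> \<not>r)\<close> implies \<open>p \<triangleright> r\<close>.\<close>

lemma logic_taut_mp:
  assumes "is_logic L" "A \<in> L" "taut (Imp A B)"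
  shows "B \<in> L"
  using assms unfolding is_logic_def by blast

lemma logic_subst:
  assumes "is_logic L" "A \<in> L"
  shows "subst s A \<in> L"
  using assms unfolding is_logic_def by blast

lemma logic_imp_trans:
  assumes L: "is_logic L" and "Imp A B \<in> L" "Imp B C \<in> L"
  shows "Imp A C \<in> L"
proof -
  have "Imp (Imp A B) (Imp (Imp B C) (Imp A C)) \<in> L"
    using L unfolding is_logic_def taut_def by simp
  then show ?thesis
    using assms L unfolding is_logic_def by blast
qed

lemma subst_fixing_vars:
  "(\<And>n. n \<in> V pol F \<union> V (\<not> pol) F \<Longrightarrow> s n = Atom n) \<Longrightarrow> subst s F = F"
proof (induction F arbitrary: pol)
  case (Atom x)
  then show ?case by (cases pol) auto
next
  case (Imp F G)
  then show ?case using Imp.IH(1)[of "\<not> pol"] Imp.IH(2)[of pol] by auto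
next
  case (Tri F G)
  then show ?case using Tri.IH(1)[of "\<not> pol"] Tri.IH(2)[of pol] by auto
qed auto

lemma CKCEM_Neg_Tri_Neg_imp_Tri: "Imp (Neg (Tri A (Neg B))) (Tri A B) \<in> CKCEM"
proof -
  have "Imp (Tri A (Neg (Neg B))) (Tri A B) \<in> CKCEM"
    by (intro CKCEM.RCE CKCEM.taut) (auto simp: taut_def Iff_def Neg_def)
  moreover have "Imp (Or (Tri A (Neg B)) (Tri A (Neg (Neg B))))
      (Imp (Imp (Tri A (Neg (Neg B))) (Tri A B)) (Imp (Neg (Tri A (Neg B))) (Tri A B))) \<in> CKCEM"
    by (rule CKCEM.taut) (auto simp: taut_def Neg_def)
  ultimately show ?thesis
    using CKCEM.CEM CKCEM.mp by blast
qed

text \<open>The uniform interpolant \<open>\<exists>\<^sup>+q \<chi>\<close> loses every occurrence of \<open>q\<close>, since \<open>\<chi>\<close> has no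
  negative ones; hence it is invariant under substitutions for \<open>q\<close>.\<close>

lemma ULIP_subst_positive_atom:
  assumes L: "is_logic L" and "ULIP L"
    and "q \<notin> V False \<chi>" and "q \<notin> V True Z" and "Imp \<chi> Z \<in> L"
    and s: "\<And>n. n \<noteq> q \<Longrightarrow> s n = Atom n"
  shows "Imp \<chi> (subst s Z) \<in> L"
proof -
  obtain E where E_free: "q \<notin> V True E" and E_neg: "V False E \<subseteq> V False \<chi>"
    and "Imp \<chi> E \<in> L"
    and E_least: "\<And>B. q \<notin> V True B \<Longrightarrow> Imp \<chi> B \<in> L \<Longrightarrow> Imp E B \<in> L"
    using \<open>ULIP L\<close> unfolding ULIP_def by meson
  have "Imp E Z \<in> L"
    using E_least assms by blast
  then have "Imp (subst s E) (subst s Z) \<in> L"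
    using logic_subst[OF L] by fastforce
  moreover have "subst s E = E"
    using E_free E_neg \<open>q \<notin> V False \<chi>\<close> s
    by (intro subst_fixing_vars[of True]) (metis UnE subsetD)
  ultimately show ?thesis
    using logic_imp_trans[OF L \<open>Imp \<chi> E \<in> L\<close>] by simp
qed

theorem mainTheorem13:
  fixes L :: "fm set" and p q r :: nat
  assumes "is_logic L" and "CKCEM \<subseteq> L"
    and "p \<noteq> q" and "p \<noteq> r" and "q \<noteq> r"
    and "ULIP L"
  shows "Or (Tri (Atom p) (Atom r)) (Tri (Atom q) (Neg (Atom r))) \<in> L"
proof -
  define X where "X = Tri (Atom q) (Neg (Atom r))"
  define s where "s = (\<lambda>n. if n = q then Atom p else Atom n)"
  have "Imp (Neg X) (Tri (Atom q) (Atom r)) \<in> L"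
    using CKCEM_Neg_Tri_Neg_imp_Tri \<open>CKCEM \<subseteq> L\<close> unfolding X_def by blast
  then have "Imp (Neg X) (subst s (Tri (Atom q) (Atom r))) \<in> L"
    using \<open>q \<noteq> r\<close>
    by (intro ULIP_subst_positive_atom[OF \<open>is_logic L\<close> \<open>ULIP L\<close>])
      (auto simp: X_def Neg_def s_def)
  then have "Imp (Neg X) (Tri (Atom p) (Atom r)) \<in> L"
    using \<open>q \<noteq> r\<close> by (simp add: s_def)
  then show ?thesis
    unfolding X_def
    by (rule logic_taut_mp[OF \<open>is_logic L\<close>]) (auto simp: taut_def Neg_def)
qed

end
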